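(* Under the model and the disjoint threshold-based policy with threshold $P_S>0$ described in the context, the long-run transmission probability of $S$, $$\Psi_S=\lim_{n\to\infty}\frac1n\sum_{t=1}^n \mathbf{E}\big[\mathbf{1}_{B_S^t\ge P_S}\big],$$ exists and equals $$\Psi_S=\min\Big(1,\frac{\lambda_S}{P_S}\Big).$$
   Context: Time is slotted, $t=1,2,\dots$ (one slot = unit time, so energy and power are identified). The transmitter $S$ harvests energy $E_S^t\ge 0$ at the end of slot $t$; $\{E_S^t\}_t$ is a stationary and ergodic sequence with mean $\mathbf{E}[E_S^t]=\lambda_S>0$. The battery has infinite capacity; $B_S^t$ is the battery energy at the beginning of slot $t$, with $B_S^1=0$, and $B_S^{t+1}=B_S^t-P_S^t+E_S^t$, where $P_S^t$ is the energy consumed in slot $t$. Disjoint threshold-based policy with threshold $P_S>0$: $P_S^t=P_S$ if $B_S^t\ge P_S$ (then $S$ transmits), and $P_S^t=0$ otherwise. *)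

theory Defs
  imports "HOL-Probability.Probability"
begin

abbreviation path_space :: "(nat \<Rightarrow> real) measure" where
  "path_space \<equiv> PiM UNIV (\<lambda>_. borel)"

definition process_law :: "'a measure \<Rightarrow> (nat \<Rightarrow> 'a \<Rightarrow> real) \<Rightarrow> (nat \<Rightarrow> real) measure" where
  "process_law M X = distr M path_space (\<lambda>\<omega> t. X t \<omega>)"

definition path_shift :: "(nat \<Rightarrow> real) \<Rightarrow> (nat \<Rightarrow> real)" where
  "path_shift x = (\<lambda>t. x (Suc t))"

definition stationary_process :: "'a measure \<Rightarrow> (nat \<Rightarrow> 'a \<Rightarrow> real) \<Rightarrow> bool" where
  "stationary_process M X \<longleftrightarrow>
     (\<forall>t. X t \<in> borel_measurable M) \<and>
     distr M path_space (\<lambda>\<omega> t. X (Suc t) \<omega>) = process_law M X"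

definition ergodic_process :: "'a measure \<Rightarrow> (nat \<Rightarrow> 'a \<Rightarrow> real) \<Rightarrow> bool" where
  "ergodic_process M X \<longleftrightarrow>
     (\<forall>A \<in> sets path_space.
        path_shift -` A \<inter> space path_space = A \<longrightarrow>
        measure (process_law M X) A = 0 \<or> measure (process_law M X) A = 1)"

text \<open>Battery level at the beginning of slot t+1 (slot t+1 of the paper, indexing from 0)
  under the threshold policy with threshold P, driven by harvested energies Eh.\<close>
primrec battery :: "(nat \<Rightarrow> 'a \<Rightarrow> real) \<Rightarrow> real \<Rightarrow> nat \<Rightarrow> 'a \<Rightarrow> real" where
  "battery Eh P 0 \<omega> = 0"
| "battery Eh P (Suc t) \<omega> =
     battery Eh P t \<omega> - (if battery Eh P t \<omega> \<ge> P then P else 0) + Eh t \<omega>"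

end

theory Submission
  imports Defs
begin

text \<open>
  Let \<open>N\<^sub>n\<close> be the number of transmissions in the first \<open>n\<close> slots and \<open>S\<^sub>n\<close> the energy
  harvested in them. The battery never goes negative, so \<open>P N\<^sub>n \<le> S\<^sub>n\<close>; with \<open>N\<^sub>n \<le> n\<close> this
  bounds the expected frequency by \<open>min 1 (\<lambda>/P)\<close>. Conversely, the missed slots are controlled
  by the running maximum \<open>M\<^sub>n\<close> of the deficit walk \<open>\<Sum>t<k. P - E\<^sup>t\<close>:
  \<open>P (n - N\<^sub>n) \<le> 2P + M\<^sub>n\<close>. By Lindley's recursion and stationarity, the increments of the
  expectation of \<open>M\<^sub>n\<close> are the expectations of \<open>max (P - E\<^sup>0) (- M\<^sub>n \<circ> shift)\<close>, which are
  non-increasing in \<open>n\<close> (Loynes' argument). Boundedness of the walk is a shift-invariant event,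
  so by ergodicity it has probability 0 or 1: in the first case the increments tend to
  \<open>P - \<lambda>\<close>, in the second to the expectation of the coboundary \<open>M\<^sub>\<infinity> - M\<^sub>\<infinity> \<circ> shift\<close>, which
  is 0. So the expectation of \<open>M\<^sub>n\<close> grows at most like \<open>n \<cdot> max 0 (P - \<lambda>)\<close>, matching the
  upper bound.
\<close>

lemma tendsto_of_upper_and_affine_lower:
  fixes u :: "nat \<Rightarrow> real"
  assumes upper: "\<And>n. 0 < n \<Longrightarrow> u n \<le> c"
    and lower: "\<And>e. 0 < e \<Longrightarrow> \<exists>K. \<forall>n>0. c - e - K / real n \<le> u n"
  shows "u \<longlonglongrightarrow> c"
proof (rule LIMSEQ_I)
  fix r :: real
  assume r: "0 < r"
  then obtain K where K: "\<And>n. 0 < n \<Longrightarrow> c - r / 2 - K / real n \<le> u n"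
    using lower[of "r / 2"] by auto
  obtain N :: nat where N: "2 * \<bar>K\<bar> / r < real N"
    using reals_Archimedean2 by blast
  have "norm (u n - c) < r" if "Suc N \<le> n" for n
  proof -
    have "2 * \<bar>K\<bar> < r * real N"
      using N r by (simp add: field_simps)
    also have "\<dots> \<le> r * real n"
      using that r by simp
    finally have "2 * \<bar>K\<bar> < r * real n" .
    then have "K / real n < r / 2"
      using that by (simp add: field_simps)
    then show ?thesis
      using upper[of n] K[of n] that by simp
  qed
  then show "\<exists>no. \<forall>n\<ge>no. norm (u n - c) < r"
    by blast
qed

lemma space_path_space [simp]: "space path_space = UNIV"
  by (auto simp: space_PiM PiE_def extensional_def)

lemma path_shift_measurable [measurable]: "path_shift \<in> measurable path_space path_space"
  unfolding path_shift_def by (rule measurable_PiM_single') auto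

lemma battery_coords_measurable [measurable]:
  "battery (\<lambda>t x. x t) P t \<in> borel_measurable path_space"
  by (induction t) auto

lemma battery_coords_process: "battery (\<lambda>t x. x t) P t (\<lambda>t. X t \<omega>) = battery X P t \<omega>"
  by (induction t) simp_all

definition transmissions :: "(nat \<Rightarrow> 'a \<Rightarrow> real) \<Rightarrow> real \<Rightarrow> nat \<Rightarrow> 'a \<Rightarrow> real" where
  "transmissions X P n \<omega> = (\<Sum>t<n. of_bool (P \<le> battery X P t \<omega>))"

lemma transmissions_coords_measurable [measurable]:
  "transmissions (\<lambda>t x. x t) P n \<in> borel_measurable path_space"
  unfolding transmissions_def by measurable

lemma transmissions_0 [simp]: "transmissions X P 0 \<omega> = 0"
  and transmissions_Suc [simp]:
    "transmissions X P (Suc n) \<omega> = transmissions X P n \<omega> + of_bool (P \<le> battery X P n \<omega>)"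
  by (simp_all add: transmissions_def)

lemma transmissions_le: "transmissions X P n \<omega> \<le> real n"
  by (induction n) auto

lemma transmissions_nonneg: "0 \<le> transmissions X P n \<omega>"
  by (induction n) auto

lemma battery_eq_harvest_minus_spent:
  "battery X P n \<omega> = (\<Sum>t<n. X t \<omega>) - P * transmissions X P n \<omega>"
  by (induction n) (simp_all add: algebra_simps)

lemma battery_nonneg: "(\<And>t. 0 \<le> X t \<omega>) \<Longrightarrow> 0 \<le> battery X P n \<omega>"
  by (induction n) (auto simp: add_nonneg_nonneg)

definition deficit :: "real \<Rightarrow> nat \<Rightarrow> (nat \<Rightarrow> real) \<Rightarrow> real" where
  "deficit P k x = (\<Sum>t<k. P - x t)"

fun max_deficit :: "real \<Rightarrow> nat \<Rightarrow> (nat \<Rightarrow> real) \<Rightarrow> real" where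
  "max_deficit P 0 x = 0"
| "max_deficit P (Suc n) x = max (max_deficit P n x) (deficit P (Suc n) x)"

lemma deficit_measurable [measurable]: "deficit P k \<in> borel_measurable path_space"
  unfolding deficit_def by measurable

lemma max_deficit_measurable [measurable]: "max_deficit P n \<in> borel_measurable path_space"
  by (induction n) auto

lemma deficit_0 [simp]: "deficit P 0 x = 0"
  by (simp add: deficit_def)

lemma deficit_Suc_shift: "deficit P (Suc k) x = (P - x 0) + deficit P k (path_shift x)"
  unfolding deficit_def path_shift_def by (subst sum.lessThan_Suc_shift) simp

lemma incseq_max_deficit: "incseq (\<lambda>n. max_deficit P n x)"
  by (rule incseq_SucI) simp

lemma max_deficit_mono: "m \<le> n \<Longrightarrow> max_deficit P m x \<le> max_deficit P n x"
  using incseq_max_deficit by (auto simp: incseq_def)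

lemma deficit_le_max_deficit: "k \<le> n \<Longrightarrow> deficit P k x \<le> max_deficit P n x"
  by (induction n) (auto simp: le_Suc_eq)

lemma max_deficit_nonneg: "0 \<le> max_deficit P n x"
  using deficit_le_max_deficit[of 0 n P x] by simp

lemma max_deficit_le_sum_abs: "max_deficit P n x \<le> (\<Sum>t<n. \<bar>P - x t\<bar>)"
proof (induction n)
  case (Suc n)
  have "deficit P (Suc n) x \<le> (\<Sum>t<Suc n. \<bar>P - x t\<bar>)"
    unfolding deficit_def by (rule sum_mono) auto
  then show ?case using Suc by simp
qed simp

text \<open>Lindley's recursion, read on the shifted path.\<close>
lemma max_deficit_Suc_shift:
  "max_deficit P (Suc n) x = max 0 (P - x 0 + max_deficit P n (path_shift x))"
proof (induction n)
  case (Suc n)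
  have "max_deficit P (Suc (Suc n)) x
      = max (max 0 (P - x 0 + max_deficit P n (path_shift x)))
            (P - x 0 + deficit P (Suc n) (path_shift x))"
    using Suc by (simp add: deficit_Suc_shift[of P "Suc n"])
  then show ?case by (simp add: max_def)
qed (simp add: deficit_Suc_shift)

lemma missed_slots_le_max_deficit:
  assumes "0 \<le> P"
  shows "P * (real n - transmissions (\<lambda>t x. x t) P n x) \<le> 2 * P + max_deficit P n x"
proof (induction n)
  case 0
  then show ?case using assms by (simp add: max_deficit_nonneg)
next
  case (Suc n)
  show ?case
  proof (cases "P \<le> battery (\<lambda>t x. x t) P n x")
    case True
    then show ?thesis
      using Suc max_deficit_mono[of n "Suc n" P x] by (simp add: algebra_simps)
  next
    case False
    have "deficit P n x = real n * P - (\<Sum>t<n. x t)"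
      by (simp add: deficit_def sum_subtractf)
    then have "P * (real (Suc n) - transmissions (\<lambda>t x. x t) P (Suc n) x)
        = battery (\<lambda>t x. x t) P n x + deficit P n x + P"
      using False battery_eq_harvest_minus_spent[of "\<lambda>t x. x t" P n x]
      by (simp add: algebra_simps)
    also have "\<dots> \<le> 2 * P + max_deficit P (Suc n) x"
      using False deficit_le_max_deficit[of n "Suc n" P x] by simp
    finally show ?thesis .
  qed
qed

definition deficit_step :: "real \<Rightarrow> nat \<Rightarrow> (nat \<Rightarrow> real) \<Rightarrow> real" where
  "deficit_step P n x = max (P - x 0) (- max_deficit P n (path_shift x))"

lemma deficit_step_measurable [measurable]: "deficit_step P n \<in> borel_measurable path_space"
  unfolding deficit_step_def by measurable

lemma abs_deficit_step_le: "\<bar>deficit_step P n x\<bar> \<le> \<bar>P - x 0\<bar>"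
  using max_deficit_nonneg[of P n "path_shift x"] unfolding deficit_step_def by linarith

lemma deficit_step_antimono: "m \<le> n \<Longrightarrow> deficit_step P n x \<le> deficit_step P m x"
  using max_deficit_mono[of m n P "path_shift x"] unfolding deficit_step_def by linarith

lemma max_deficit_Suc_eq_step:
  "max_deficit P (Suc n) x = deficit_step P n x + max_deficit P n (path_shift x)"
  unfolding max_deficit_Suc_shift deficit_step_def by linarith

definition bounded_deficit :: "real \<Rightarrow> (nat \<Rightarrow> real) set" where
  "bounded_deficit P = {x. bdd_above (range (\<lambda>n. max_deficit P n x))}"

lemma bounded_deficit_eq: "bounded_deficit P = {x. \<exists>C::nat. \<forall>n. max_deficit P n x \<le> real C}"
  unfolding bounded_deficit_def bdd_above_def
  by (auto, meson order_trans real_nat_ceiling_ge)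

lemma bounded_deficit_sets [measurable]: "bounded_deficit P \<in> sets path_space"
proof -
  have "{x \<in> space path_space. \<exists>C::nat. \<forall>n. max_deficit P n x \<le> real C} \<in> sets path_space"
    by measurable
  then show ?thesis
    by (simp add: bounded_deficit_eq)
qed

lemma path_shift_in_bounded_deficit_iff:
  "path_shift x \<in> bounded_deficit P \<longleftrightarrow> x \<in> bounded_deficit P"
proof
  assume "path_shift x \<in> bounded_deficit P"
  then obtain C where C: "\<And>n. max_deficit P n (path_shift x) \<le> C"
    by (auto simp: bounded_deficit_def bdd_above_def)
  have "max_deficit P n x \<le> max 0 (P - x 0 + C)" for n
  proof (cases n)
    case (Suc m)
    then show ?thesis
      using C[of m] by (simp del: max_deficit.simps(2) add: max_deficit_Suc_shift max.coboundedI2)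
  qed simp
  then show "x \<in> bounded_deficit P"
    by (auto simp: bounded_deficit_def bdd_above_def)
next
  assume "x \<in> bounded_deficit P"
  then obtain C where C: "\<And>n. max_deficit P n x \<le> C"
    by (auto simp: bounded_deficit_def bdd_above_def)
  have "max_deficit P n (path_shift x) \<le> C - (P - x 0)" for n
    using C[of "Suc n"] by (simp del: max_deficit.simps(2) add: max_deficit_Suc_shift)
  then show "path_shift x \<in> bounded_deficit P"
    by (auto simp: bounded_deficit_def bdd_above_def)
qed

text \<open>The supremum of the deficit walk, set to \<open>0\<close> off \<open>bounded_deficit P\<close> so that it is a
  measurable real-valued function.\<close>
definition sup_deficit :: "real \<Rightarrow> (nat \<Rightarrow> real) \<Rightarrow> real" where
  "sup_deficit P x = (SUP n. if x \<in> bounded_deficit P then max_deficit P n x else 0)"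

lemma bdd_above_max_deficit_if:
  "bdd_above (range (\<lambda>n. if x \<in> bounded_deficit P then max_deficit P n x else 0))"
  by (cases "x \<in> bounded_deficit P") (auto simp: bounded_deficit_def)

lemma sup_deficit_measurable [measurable]: "sup_deficit P \<in> borel_measurable path_space"
  unfolding sup_deficit_def by (rule borel_measurable_cSUP[OF _ _ bdd_above_max_deficit_if]) auto

lemma sup_deficit_nonneg: "0 \<le> sup_deficit P x"
  using cSUP_upper[OF _ bdd_above_max_deficit_if, of 0 x P]
  by (auto simp: sup_deficit_def split: if_splits)

lemma max_deficit_tendsto_sup:
  assumes "x \<in> bounded_deficit P"
  shows "(\<lambda>n. max_deficit P n x) \<longlonglongrightarrow> sup_deficit P x"
  using LIMSEQ_incseq_SUP[OF bdd_above_max_deficit_if, of x P] assms incseq_max_deficit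
  by (simp add: sup_deficit_def)

lemma sup_deficit_shift:
  assumes "x \<in> bounded_deficit P"
  shows "sup_deficit P x = max 0 (P - x 0 + sup_deficit P (path_shift x))"
proof (rule LIMSEQ_unique)
  show "(\<lambda>n. max_deficit P (Suc n) x) \<longlonglongrightarrow> sup_deficit P x"
    using max_deficit_tendsto_sup[OF assms] by (rule LIMSEQ_Suc)
  show "(\<lambda>n. max_deficit P (Suc n) x) \<longlonglongrightarrow> max 0 (P - x 0 + sup_deficit P (path_shift x))"
    unfolding max_deficit_Suc_shift using assms
    by (intro tendsto_intros max_deficit_tendsto_sup) (simp add: path_shift_in_bounded_deficit_iff)
qed

locale stationary_law = prob_space Q for Q :: "(nat \<Rightarrow> real) measure" +
  fixes lam :: real
  assumes sets_eq [measurable_cong]: "sets Q = sets path_space"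
    and distr_shift: "distr Q path_space path_shift = Q"
    and integrable_coord0: "integrable Q (\<lambda>x. x 0)"
    and integral_coord0: "(\<integral>x. x 0 \<partial>Q) = lam"
begin

lemma space_eq [simp]: "space Q = UNIV"
  using sets_eq_imp_space_eq[OF sets_eq] by simp

lemma path_shift_measurable_Q [measurable]: "path_shift \<in> measurable Q path_space"
  using measurable_cong_sets[OF sets_eq refl] by simp

lemma integral_shift:
  assumes [measurable]: "(f :: (nat \<Rightarrow> real) \<Rightarrow> real) \<in> borel_measurable path_space"
  shows "(\<integral>x. f (path_shift x) \<partial>Q) = (\<integral>x. f x \<partial>Q)"
  using integral_distr[OF path_shift_measurable_Q assms] by (simp add: distr_shift)

lemma integrable_shift_iff:
  assumes [measurable]: "(f :: (nat \<Rightarrow> real) \<Rightarrow> real) \<in> borel_measurable path_space"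
  shows "integrable Q (\<lambda>x. f (path_shift x)) \<longleftrightarrow> integrable Q f"
  using integrable_distr_eq[OF path_shift_measurable_Q assms] by (simp add: distr_shift)

lemma integrable_coord [simp, intro]: "integrable Q (\<lambda>x. x t)"
  and integral_coord: "(\<integral>x. x t \<partial>Q) = lam"
proof (induction t)
  case 0
  show "integrable Q (\<lambda>x. x 0)" "(\<integral>x. x 0 \<partial>Q) = lam"
    using integrable_coord0 integral_coord0 by simp_all
next
  case (Suc t)
  show "integrable Q (\<lambda>x. x (Suc t))" "(\<integral>x. x (Suc t) \<partial>Q) = lam"
    using Suc integral_shift[of "\<lambda>y. y t"] integrable_shift_iff[of "\<lambda>y. y t"]
    by (simp_all add: path_shift_def)
qed

lemma integrable_max_deficit [simp, intro]: "integrable Q (max_deficit P n)"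
proof (rule Bochner_Integration.integrable_bound[of _ "\<lambda>x. \<Sum>t<n. \<bar>P - x t\<bar>"])
  show "integrable Q (\<lambda>x. \<Sum>t<n. \<bar>P - x t\<bar>)" by auto
  show "AE x in Q. norm (max_deficit P n x) \<le> norm (\<Sum>t<n. \<bar>P - x t\<bar>)"
    using max_deficit_le_sum_abs[of P n] max_deficit_nonneg[of P n] by (auto simp: abs_le_iff)
qed measurable

lemma integrable_deficit_step [simp, intro]: "integrable Q (deficit_step P n)"
  by (rule Bochner_Integration.integrable_bound[of _ "\<lambda>x. P - x 0"]) (auto simp: abs_deficit_step_le)

text \<open>The expectation of a coboundary \<open>f - f \<circ> path_shift\<close> vanishes even when \<open>f\<close> itself
  is not integrable: truncate \<open>f\<close> at level \<open>c\<close>, which does not increase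
  \<open>\<bar>f - f \<circ> path_shift\<bar>\<close>, and let \<open>c \<rightarrow> \<infinity>\<close>.\<close>
lemma integral_coboundary_eq_0:
  fixes f g :: "(nat \<Rightarrow> real) \<Rightarrow> real"
  assumes [measurable]: "f \<in> borel_measurable path_space"
    and f_nonneg: "\<And>x. 0 \<le> f x"
    and g_integrable: "integrable Q g"
    and g_eq: "AE x in Q. g x = f x - f (path_shift x)"
  shows "(\<integral>x. g x \<partial>Q) = 0"
proof -
  define h where "h c x = min (f x) (real c) - min (f (path_shift x)) (real c)" for c :: nat and x
  have [measurable]: "h c \<in> borel_measurable Q" for c
    unfolding h_def by measurable
  have "(\<integral>x. h c x \<partial>Q) = 0" for c
  proof -
    have [measurable]: "(\<lambda>x. min (f x) (real c)) \<in> borel_measurable path_space"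
      by measurable
    have int: "integrable Q (\<lambda>x. min (f x) (real c))"
      by (rule Bochner_Integration.integrable_bound[of _ "\<lambda>_. real c"]) (auto simp: f_nonneg)
    then have "integrable Q (\<lambda>x. min (f (path_shift x)) (real c))"
      by (simp add: integrable_shift_iff[of "\<lambda>x. min (f x) (real c)"])
    with int show ?thesis
      unfolding h_def by (simp add: integral_shift[of "\<lambda>x. min (f x) (real c)"])
  qed
  moreover have "(\<lambda>c. \<integral>x. h c x \<partial>Q) \<longlonglongrightarrow> (\<integral>x. g x \<partial>Q)"
  proof (rule integral_dominated_convergence[where w="\<lambda>x. \<bar>g x\<bar>"])
    show "AE x in Q. norm (h c x) \<le> \<bar>g x\<bar>" for c
      using g_eq by eventually_elim (auto simp: h_def)
    show "AE x in Q. (\<lambda>c. h c x) \<longlonglongrightarrow> g x"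
      using g_eq
    proof eventually_elim
      case (elim x)
      obtain N :: nat where "max (f x) (f (path_shift x)) \<le> real N"
        using real_nat_ceiling_ge by blast
      then have "\<forall>c\<ge>N. h c x = g x"
        using elim by (auto simp: h_def)
      then show ?case
        by (intro tendsto_eventually) (auto simp: eventually_sequentially)
    qed
  qed (use g_integrable in auto)
  ultimately show ?thesis
    by (simp add: LIMSEQ_const_iff)
qed

definition drift :: "real \<Rightarrow> nat \<Rightarrow> real" where
  "drift P n = (\<integral>x. deficit_step P n x \<partial>Q)"

lemma integral_max_deficit_Suc:
  "(\<integral>x. max_deficit P (Suc n) x \<partial>Q) = (\<integral>x. max_deficit P n x \<partial>Q) + drift P n"
proof -
  have "integrable Q (\<lambda>x. max_deficit P n (path_shift x))"
    by (simp add: integrable_shift_iff)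
  then have "(\<integral>x. max_deficit P (Suc n) x \<partial>Q)
      = drift P n + (\<integral>x. max_deficit P n (path_shift x) \<partial>Q)"
    unfolding max_deficit_Suc_eq_step drift_def by (intro Bochner_Integration.integral_add) auto
  then show ?thesis
    by (simp add: integral_shift)
qed

lemma drift_antimono: "m \<le> n \<Longrightarrow> drift P n \<le> drift P m"
  unfolding drift_def by (rule integral_mono) (auto simp: deficit_step_antimono)

lemma integral_max_deficit_le:
  assumes "m \<le> n"
  shows "(\<integral>x. max_deficit P n x \<partial>Q) \<le> (\<integral>x. max_deficit P m x \<partial>Q) + real (n - m) * drift P m"
  using assms
proof (induction n rule: dec_induct)
  case (step n)
  have "(\<integral>x. max_deficit P (Suc n) x \<partial>Q) = (\<integral>x. max_deficit P n x \<partial>Q) + drift P n"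
    by (rule integral_max_deficit_Suc)
  also have "\<dots> \<le> (\<integral>x. max_deficit P m x \<partial>Q) + real (n - m) * drift P m + drift P m"
    using step.IH drift_antimono[OF step.hyps(1), of P] by simp
  also have "\<dots> = (\<integral>x. max_deficit P m x \<partial>Q) + real (Suc n - m) * drift P m"
    using step.hyps(1) by (simp add: Suc_diff_le algebra_simps)
  finally show ?case .
qed simp

lemma drift_tendsto_if_unbounded:
  assumes unbounded: "AE x in Q. x \<notin> bounded_deficit P"
  shows "drift P \<longlonglongrightarrow> P - lam"
proof -
  have "drift P \<longlonglongrightarrow> (\<integral>x. P - x 0 \<partial>Q)"
    unfolding drift_def
  proof (rule integral_dominated_convergence[where w="\<lambda>x. \<bar>P - x 0\<bar>"])
    show "AE x in Q. norm (deficit_step P n x) \<le> \<bar>P - x 0\<bar>" for n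
      by (simp add: abs_deficit_step_le)
    show "AE x in Q. (\<lambda>n. deficit_step P n x) \<longlonglongrightarrow> P - x 0"
      using unbounded
    proof eventually_elim
      case (elim x)
      then have "path_shift x \<notin> bounded_deficit P"
        by (simp add: path_shift_in_bounded_deficit_iff)
      then obtain m where "x 0 - P < max_deficit P m (path_shift x)"
        by (auto simp: bounded_deficit_def bdd_above_def not_le)
      then have "\<forall>n\<ge>m. deficit_step P n x = P - x 0"
        using max_deficit_mono[of m _ P "path_shift x"] by (fastforce simp: deficit_step_def)
      then show ?case
        by (intro tendsto_eventually) (auto simp: eventually_sequentially)
    qed
  qed auto
  then show ?thesis
    using prob_space by (simp add: integral_coord)
qed

text \<open>On \<open>bounded_deficit P\<close> the steps converge to the coboundary
  \<open>sup_deficit P - sup_deficit P \<circ> path_shift\<close>.\<close>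
lemma drift_tendsto_if_bounded:
  assumes bounded: "AE x in Q. x \<in> bounded_deficit P"
  shows "drift P \<longlonglongrightarrow> 0"
proof -
  define g where "g x = max (P - x 0) (- sup_deficit P (path_shift x))" for x
  have [measurable]: "g \<in> borel_measurable Q"
    unfolding g_def by measurable
  have "drift P \<longlonglongrightarrow> (\<integral>x. g x \<partial>Q)"
    unfolding drift_def
  proof (rule integral_dominated_convergence[where w="\<lambda>x. \<bar>P - x 0\<bar>"])
    show "AE x in Q. norm (deficit_step P n x) \<le> \<bar>P - x 0\<bar>" for n
      by (simp add: abs_deficit_step_le)
    show "AE x in Q. (\<lambda>n. deficit_step P n x) \<longlonglongrightarrow> g x"
      using bounded unfolding deficit_step_def g_def
      by eventually_elim
        (intro tendsto_intros max_deficit_tendsto_sup, simp add: path_shift_in_bounded_deficit_iff)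
  qed auto
  moreover have "(\<integral>x. g x \<partial>Q) = 0"
  proof (rule integral_coboundary_eq_0[OF sup_deficit_measurable sup_deficit_nonneg])
    have g_bound: "\<bar>g x\<bar> \<le> \<bar>P - x 0\<bar>" for x
      using sup_deficit_nonneg[of P "path_shift x"] unfolding g_def by linarith
    show "integrable Q g"
      by (rule Bochner_Integration.integrable_bound[of _ "\<lambda>x. P - x 0"]) (auto simp: g_bound)
    have "g x = sup_deficit P x - sup_deficit P (path_shift x)" if "x \<in> bounded_deficit P" for x
      using sup_deficit_shift[OF that] unfolding g_def by linarith
    with bounded show "AE x in Q. g x = sup_deficit P x - sup_deficit P (path_shift x)"
      by auto
  qed
  ultimately show ?thesis
    by simp
qed

lemma integrable_transmissions [simp, intro]: "integrable Q (transmissions (\<lambda>t x. x t) P n)"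
  by (rule Bochner_Integration.integrable_bound[of _ "\<lambda>_. real n"])
    (auto simp: transmissions_le transmissions_nonneg)

lemma integral_transmissions:
  "(\<integral>x. transmissions (\<lambda>t x. x t) P n x \<partial>Q) = (\<Sum>t<n. measure Q {x. P \<le> battery (\<lambda>t x. x t) P t x})"
proof -
  have "{x \<in> space Q. P \<le> battery (\<lambda>t x. x t) P t x} \<in> sets Q" for t
    by measurable
  then have [measurable]: "{x. P \<le> battery (\<lambda>t x. x t) P t x} \<in> sets Q" for t
    by simp
  have "transmissions (\<lambda>t x. x t) P n = (\<lambda>x. \<Sum>t<n. indicator {x. P \<le> battery (\<lambda>t x. x t) P t x} x)"
    by (simp add: fun_eq_iff transmissions_def indicator_def)
  moreover have "integrable Q (indicator {x. P \<le> battery (\<lambda>t x. x t) P t x} :: _ \<Rightarrow> real)" for t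
    by (rule integrable_real_indicator) (auto simp: less_top[symmetric])
  ultimately show ?thesis
    by (simp add: Bochner_Integration.integral_sum)
qed

lemma integral_transmissions_le:
  assumes "0 < P" and nonneg: "\<And>t. AE x in Q. 0 \<le> x t"
  shows "(\<integral>x. transmissions (\<lambda>t x. x t) P n x \<partial>Q) \<le> real n * min 1 (lam / P)"
proof -
  have "(\<integral>x. transmissions (\<lambda>t x. x t) P n x \<partial>Q) \<le> (\<integral>x. real n \<partial>Q)"
    by (intro integral_mono) (auto simp: transmissions_le)
  then have "(\<integral>x. transmissions (\<lambda>t x. x t) P n x \<partial>Q) \<le> real n"
    using prob_space by simp
  moreover have "P * (\<integral>x. transmissions (\<lambda>t x. x t) P n x \<partial>Q) \<le> real n * lam"
  proof -
    have "AE x in Q. \<forall>t. 0 \<le> x t"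
      using nonneg by (simp add: AE_all_countable)
    then have "AE x in Q. P * transmissions (\<lambda>t x. x t) P n x \<le> (\<Sum>t<n. x t)"
    proof eventually_elim
      case (elim x)
      then show ?case
        using battery_nonneg[of "\<lambda>t x. x t" x P n] battery_eq_harvest_minus_spent[of _ P n x]
        by simp
    qed
    then have "(\<integral>x. P * transmissions (\<lambda>t x. x t) P n x \<partial>Q) \<le> (\<integral>x. (\<Sum>t<n. x t) \<partial>Q)"
      by (intro integral_mono_AE) auto
    then show ?thesis
      by (simp add: integral_coord)
  qed
  then have "(\<integral>x. transmissions (\<lambda>t x. x t) P n x \<partial>Q) \<le> real n * (lam / P)"
    using assms(1) by (simp add: field_simps)
  ultimately show ?thesis
    by (simp add: min_def)
qed

lemma integral_missed_slots_le:
  assumes "0 \<le> P"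
  shows "P * (real n - (\<integral>x. transmissions (\<lambda>t x. x t) P n x \<partial>Q))
    \<le> 2 * P + (\<integral>x. max_deficit P n x \<partial>Q)"
proof -
  have "P * (real n - (\<integral>x. transmissions (\<lambda>t x. x t) P n x \<partial>Q))
      = (\<integral>x. P * (real n - transmissions (\<lambda>t x. x t) P n x) \<partial>Q)"
    using prob_space by (simp add: right_diff_distrib)
  also have "\<dots> \<le> (\<integral>x. 2 * P + max_deficit P n x \<partial>Q)"
    using missed_slots_le_max_deficit[OF assms] by (intro integral_mono) auto
  also have "\<dots> = 2 * P + (\<integral>x. max_deficit P n x \<partial>Q)"
    using prob_space by simp
  finally show ?thesis .
qed

end

locale ergodic_law = stationary_law +
  assumes ergodic: "\<And>A. A \<in> sets path_space \<Longrightarrow> path_shift -` A \<inter> space path_space = A \<Longrightarrow>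
      measure Q A = 0 \<or> measure Q A = 1"
begin

lemma drift_tendsto: "drift P \<longlonglongrightarrow> P - lam \<or> drift P \<longlonglongrightarrow> 0"
proof -
  have "measure Q (bounded_deficit P) = 0 \<or> measure Q (bounded_deficit P) = 1"
    by (rule ergodic) (auto simp: path_shift_in_bounded_deficit_iff)
  then have "(AE x in Q. x \<notin> bounded_deficit P) \<or> (AE x in Q. x \<in> bounded_deficit P)"
    by (simp add: prob_eq_0 prob_eq_1)
  then show ?thesis
    using drift_tendsto_if_unbounded drift_tendsto_if_bounded by blast
qed

lemma integral_max_deficit_le_linear:
  assumes "0 < e"
  obtains K where "\<And>n. (\<integral>x. max_deficit P n x \<partial>Q) \<le> K + real n * (max 0 (P - lam) + e)"
proof -
  define r where "r = max 0 (P - lam) + e"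
  have "P - lam < r" "0 < r"
    using assms by (auto simp: r_def)
  then have "eventually (\<lambda>n. drift P n < r) sequentially"
    using drift_tendsto[of P] by (metis order_tendstoD(2))
  then obtain m where m: "drift P m \<le> r"
    by (auto simp: eventually_sequentially intro: less_imp_le)
  have "(\<integral>x. max_deficit P n x \<partial>Q) \<le> (\<integral>x. max_deficit P m x \<partial>Q) + real n * r" for n
  proof (cases "m \<le> n")
    case True
    have "real (n - m) * drift P m \<le> real (n - m) * r"
      using m by (intro mult_left_mono) auto
    also have "\<dots> \<le> real n * r"
      using assms by (intro mult_right_mono) (auto simp: r_def)
    finally have "real (n - m) * drift P m \<le> real n * r" .
    then show ?thesis
      using integral_max_deficit_le[OF True, of P] by simp
  next
    case False
    have "(\<integral>x. max_deficit P n x \<partial>Q) \<le> (\<integral>x. max_deficit P m x \<partial>Q)"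
      using False by (intro integral_mono) (auto intro: max_deficit_mono)
    moreover have "0 \<le> real n * r"
      using assms by (simp add: r_def)
    ultimately show ?thesis
      by simp
  qed
  then show thesis
    using that unfolding r_def by blast
qed

lemma integral_transmissions_ge:
  assumes P: "0 < P" and "0 < e"
  obtains C where "\<And>n. real n * (min 1 (lam / P) - e) - C \<le> (\<integral>x. transmissions (\<lambda>t x. x t) P n x \<partial>Q)"
proof -
  define N where "N n = (\<integral>x. transmissions (\<lambda>t x. x t) P n x \<partial>Q)" for n
  obtain K where K: "\<And>n. (\<integral>x. max_deficit P n x \<partial>Q) \<le> K + real n * (max 0 (P - lam) + P * e)"
    using integral_max_deficit_le_linear[of "P * e" P] assms by auto
  define C where "C = (2 * P + K) / P"
  have "P * min 1 (lam / P) = P - max 0 (P - lam)"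
    using P by (auto simp: min_def max_def field_simps)
  then have split: "P * (real n * min 1 (lam / P) - N n)
      = real n * P - real n * max 0 (P - lam) - P * N n" for n
    by (metis mult.left_commute right_diff_distrib)
  have "P * (real n * min 1 (lam / P) - N n) \<le> 2 * P + K + real n * (P * e)" for n
    using split[of n] integral_missed_slots_le[of P n] K[of n] P unfolding N_def
    by (simp add: algebra_simps)
  also have "2 * P + K + real n * (P * e) = P * (C + real n * e)" for n
    using P by (simp add: C_def field_simps)
  finally have "P * (real n * min 1 (lam / P) - N n) \<le> P * (C + real n * e)" for n .
  then have "real n * min 1 (lam / P) - N n \<le> C + real n * e" for n
    using P mult_le_cancel_left_pos by blast
  then have "real n * (min 1 (lam / P) - e) - C \<le> N n" for n
    by (simp add: algebra_simps)
  then show thesis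
    using that unfolding N_def by blast
qed

theorem transmission_frequency_tendsto:
  assumes P: "0 < P" and nonneg: "\<And>t. AE x in Q. 0 \<le> x t"
  shows "(\<lambda>n. (\<Sum>t<n. measure Q {x. P \<le> battery (\<lambda>t x. x t) P t x}) / real n)
    \<longlonglongrightarrow> min 1 (lam / P)"
  unfolding integral_transmissions[symmetric]
proof (rule tendsto_of_upper_and_affine_lower)
  show "(\<integral>x. transmissions (\<lambda>t x. x t) P n x \<partial>Q) / real n \<le> min 1 (lam / P)" if "0 < n" for n
    using integral_transmissions_le[OF P nonneg, of n] that
    by (metis mult.commute of_nat_0_less_iff pos_divide_le_eq)
  fix e :: real
  assume "0 < e"
  then obtain C where lower:
    "\<And>n. real n * (min 1 (lam / P) - e) - C \<le> (\<integral>x. transmissions (\<lambda>t x. x t) P n x \<partial>Q)"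
    using integral_transmissions_ge[OF P] by blast
  have "min 1 (lam / P) - e - C / real n \<le> (\<integral>x. transmissions (\<lambda>t x. x t) P n x \<partial>Q) / real n"
    if "0 < n" for n
  proof -
    have "min 1 (lam / P) - e - C / real n = (real n * (min 1 (lam / P) - e) - C) / real n"
      using that by (simp add: field_simps)
    also have "\<dots> \<le> (\<integral>x. transmissions (\<lambda>t x. x t) P n x \<partial>Q) / real n"
      using lower[of n] by (intro divide_right_mono) auto
    finally show ?thesis .
  qed
  then show "\<exists>C. \<forall>n>0. min 1 (lam / P) - e - C / real n
      \<le> (\<integral>x. transmissions (\<lambda>t x. x t) P n x \<partial>Q) / real n"
    by blast
qed

end

lemma process_measurable:
  assumes "\<And>t. X t \<in> borel_measurable M"
  shows "(\<lambda>\<omega> t. X t \<omega>) \<in> measurable M path_space"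
  using assms by (intro measurable_PiM_single') auto

lemma ergodic_law_process_law:
  assumes "prob_space M" and stationary: "stationary_process M E"
    and ergodic: "ergodic_process M E"
    and "integrable M (E 0)" and "(\<integral>\<omega>. E 0 \<omega> \<partial>M) = lam"
  shows "ergodic_law (process_law M E) lam"
proof -
  have E_measurable [measurable]: "E t \<in> borel_measurable M" for t
    using stationary by (simp add: stationary_process_def)
  have law: "process_law M E = distr M path_space (\<lambda>\<omega> t. E t \<omega>)"
    by (simp add: process_law_def)
  have X [measurable]: "(\<lambda>\<omega> t. E t \<omega>) \<in> measurable M path_space"
    by (rule process_measurable) simp
  have coord0 [measurable]: "(\<lambda>x :: nat \<Rightarrow> real. x 0) \<in> borel_measurable path_space"
    by measurable
  have "distr (process_law M E) path_space path_shift = distr M path_space (\<lambda>\<omega> t. E (Suc t) \<omega>)"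
    unfolding law by (simp add: distr_distr[OF path_shift_measurable] comp_def path_shift_def)
  also have "\<dots> = process_law M E"
    using stationary by (simp add: stationary_process_def)
  finally have shift: "distr (process_law M E) path_space path_shift = process_law M E" .
  have "integrable (process_law M E) (\<lambda>x. x 0)"
    unfolding law using integrable_distr_eq[OF X coord0] assms(4) by simp
  moreover have "(\<integral>x. x 0 \<partial>process_law M E) = lam"
    unfolding law using integral_distr[OF X coord0] assms(5) by simp
  moreover have "prob_space (process_law M E)"
    unfolding law by (rule prob_space.prob_space_distr[OF assms(1)]) simp
  ultimately show ?thesis
    using ergodic shift unfolding ergodic_process_def
    by (intro ergodic_law.intro stationary_law.intro stationary_law_axioms.intro
        ergodic_law_axioms.intro) (simp_all add: law)
qed

lemma measure_process_law_battery:
  assumes "\<And>t. E t \<in> borel_measurable M"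
  shows "measure (process_law M E) {x. P \<le> battery (\<lambda>t x. x t) P t x}
    = measure M {\<omega> \<in> space M. P \<le> battery E P t \<omega>}"
proof -
  have "{x \<in> space path_space. P \<le> battery (\<lambda>t x. x t) P t x} \<in> sets path_space"
    by measurable
  then show ?thesis
    using measure_distr[OF process_measurable[OF assms]]
    by (simp add: process_law_def battery_coords_process vimage_def Int_def conj_commute)
qed

theorem lemma1:
  fixes M :: "'a measure" and E :: "nat \<Rightarrow> 'a \<Rightarrow> real" and lam P :: real
  assumes "prob_space M"
    and "stationary_process M E"
    and "ergodic_process M E"
    and "\<And>t \<omega>. \<omega> \<in> space M \<Longrightarrow> E t \<omega> \<ge> 0"
    and "integrable M (E 0)"
    and "(\<integral>\<omega>. E 0 \<omega> \<partial>M) = lam"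
    and "lam > 0"
    and "P > 0"
  shows "(\<lambda>n. (\<Sum>t<n. measure M {\<omega> \<in> space M. battery E P t \<omega> \<ge> P}) / real n)
           \<longlonglongrightarrow> min 1 (lam / P)"
proof -
  interpret ergodic_law "process_law M E" lam
    using assms(1-3,5,6) by (rule ergodic_law_process_law)
  have E_measurable: "E t \<in> borel_measurable M" for t
    using assms(2) by (simp add: stationary_process_def)
  have "AE x in process_law M E. 0 \<le> x t" for t
  proof -
    have "{x \<in> space path_space. 0 \<le> x t} \<in> sets path_space"
      by measurable
    then show ?thesis
      unfolding process_law_def using assms(4)
      by (subst AE_distr_iff[OF process_measurable[OF E_measurable]]) auto
  qed
  from transmission_frequency_tendsto[OF assms(8) this] show ?thesis
    by (simp add: measure_process_law_battery[OF E_measurable])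
qed

end
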